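(* Let $R$ be a compact Hausdorff unitary topological ring satisfying the first countability axiom. (i) Every surjective continuous $R$-linear map $f:M\to N$ of t.d. $R$-modules is strict and admits a continuous (not necessarily additive) map $s:N\to M$ with $f\circ s=\mathrm{id}_N$. (ii) An injective continuous $R$-linear map $i:M\to N$ of t.d. $R$-modules is strict if and only if there is a continuous (not necessarily additive) map $r:N\to M$ with $r\circ i=\mathrm{id}_M$.
   Context: A complete totally disconnected (t.d.) $R$-module is a Hausdorff, complete topological left $R$-module which has a basis of neighbourhoods of $0$ consisting of open submodules and which satisfies the second countability axiom. A continuous $R$-linear map $f:M\to N$ is strict if the induced bijection $M/\ker f\to f(M)$ is a homeomorphism (quotient topology on the source, subspace topology on the target). *)

theory Defs
  imports "HOL-Analysis.Analysis" "HOL-Algebra.Module"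
begin

definition topological_ring :: "('r, 'x) ring_scheme \<Rightarrow> 'r topology \<Rightarrow> bool" where
  "topological_ring R TR \<longleftrightarrow>
     ring R \<and> topspace TR = carrier R \<and>
     continuous_map (prod_topology TR TR) TR (\<lambda>(a, b). a \<oplus>\<^bsub>R\<^esub> b) \<and>
     continuous_map (prod_topology TR TR) TR (\<lambda>(a, b). a \<otimes>\<^bsub>R\<^esub> b) \<and>
     continuous_map TR TR (\<lambda>a. \<ominus>\<^bsub>R\<^esub> a)"

text \<open>Unital left modules over a (not necessarily commutative) ring
(HOL-Algebra's \<open>module\<close> locale requires a commutative ring).\<close>

definition left_module :: "('r, 'x) ring_scheme \<Rightarrow> ('r, 'm) module \<Rightarrow> bool" where
  "left_module R M \<longleftrightarrow>
     ring R \<and> abelian_group M \<and>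
     (\<forall>a\<in>carrier R. \<forall>x\<in>carrier M. a \<odot>\<^bsub>M\<^esub> x \<in> carrier M) \<and>
     (\<forall>a\<in>carrier R. \<forall>b\<in>carrier R. \<forall>x\<in>carrier M.
        (a \<oplus>\<^bsub>R\<^esub> b) \<odot>\<^bsub>M\<^esub> x = a \<odot>\<^bsub>M\<^esub> x \<oplus>\<^bsub>M\<^esub> b \<odot>\<^bsub>M\<^esub> x) \<and>
     (\<forall>a\<in>carrier R. \<forall>x\<in>carrier M. \<forall>y\<in>carrier M.
        a \<odot>\<^bsub>M\<^esub> (x \<oplus>\<^bsub>M\<^esub> y) = a \<odot>\<^bsub>M\<^esub> x \<oplus>\<^bsub>M\<^esub> a \<odot>\<^bsub>M\<^esub> y) \<and>
     (\<forall>a\<in>carrier R. \<forall>b\<in>carrier R. \<forall>x\<in>carrier M.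
        (a \<otimes>\<^bsub>R\<^esub> b) \<odot>\<^bsub>M\<^esub> x = a \<odot>\<^bsub>M\<^esub> (b \<odot>\<^bsub>M\<^esub> x)) \<and>
     (\<forall>x\<in>carrier M. \<one>\<^bsub>R\<^esub> \<odot>\<^bsub>M\<^esub> x = x)"

definition left_submodule :: "('r, 'x) ring_scheme \<Rightarrow> ('r, 'm) module \<Rightarrow> 'm set \<Rightarrow> bool" where
  "left_submodule R M V \<longleftrightarrow>
     V \<subseteq> carrier M \<and> \<zero>\<^bsub>M\<^esub> \<in> V \<and>
     (\<forall>x\<in>V. \<forall>y\<in>V. x \<oplus>\<^bsub>M\<^esub> y \<in> V) \<and>
     (\<forall>x\<in>V. \<ominus>\<^bsub>M\<^esub> x \<in> V) \<and>
     (\<forall>a\<in>carrier R. \<forall>x\<in>V. a \<odot>\<^bsub>M\<^esub> x \<in> V)"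

definition topological_module ::
  "('r, 'x) ring_scheme \<Rightarrow> 'r topology \<Rightarrow> ('r, 'm) module \<Rightarrow> 'm topology \<Rightarrow> bool" where
  "topological_module R TR M TM \<longleftrightarrow>
     topological_ring R TR \<and> left_module R M \<and> topspace TM = carrier M \<and>
     continuous_map (prod_topology TM TM) TM (\<lambda>(x, y). x \<oplus>\<^bsub>M\<^esub> y) \<and>
     continuous_map TM TM (\<lambda>x. \<ominus>\<^bsub>M\<^esub> x) \<and>
     continuous_map (prod_topology TR TM) TM (\<lambda>(a, x). a \<odot>\<^bsub>M\<^esub> x)"

definition cauchy_filter_in :: "('r, 'm) module \<Rightarrow> 'm topology \<Rightarrow> 'm filter \<Rightarrow> bool" where
  "cauchy_filter_in M TM F \<longleftrightarrow>
     (\<forall>U. openin TM U \<and> \<zero>\<^bsub>M\<^esub> \<in> U \<longrightarrow>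
        (\<exists>A. eventually (\<lambda>x. x \<in> A) F \<and> (\<forall>x\<in>A. \<forall>y\<in>A. x \<ominus>\<^bsub>M\<^esub> y \<in> U)))"

definition complete_module_top :: "('r, 'm) module \<Rightarrow> 'm topology \<Rightarrow> bool" where
  "complete_module_top M TM \<longleftrightarrow>
     (\<forall>F. F \<noteq> bot \<and> eventually (\<lambda>x. x \<in> carrier M) F \<and> cauchy_filter_in M TM F \<longrightarrow>
        (\<exists>x\<in>carrier M. limitin TM id x F))"

definition td_module ::
  "('r, 'x) ring_scheme \<Rightarrow> 'r topology \<Rightarrow> ('r, 'm) module \<Rightarrow> 'm topology \<Rightarrow> bool" where
  "td_module R TR M TM \<longleftrightarrow>
     topological_module R TR M TM \<and> Hausdorff_space TM \<and> complete_module_top M TM \<and>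
     (\<forall>U. openin TM U \<and> \<zero>\<^bsub>M\<^esub> \<in> U \<longrightarrow>
        (\<exists>V. left_submodule R M V \<and> openin TM V \<and> V \<subseteq> U)) \<and>
     second_countable TM"

definition linear_map_mod ::
  "('r, 'x) ring_scheme \<Rightarrow> ('r, 'm) module \<Rightarrow> ('r, 'n) module \<Rightarrow> ('m \<Rightarrow> 'n) \<Rightarrow> bool" where
  "linear_map_mod R M N f \<longleftrightarrow>
     f \<in> carrier M \<rightarrow> carrier N \<and>
     (\<forall>x\<in>carrier M. \<forall>y\<in>carrier M. f (x \<oplus>\<^bsub>M\<^esub> y) = f x \<oplus>\<^bsub>N\<^esub> f y) \<and>
     (\<forall>a\<in>carrier R. \<forall>x\<in>carrier M. f (a \<odot>\<^bsub>M\<^esub> x) = a \<odot>\<^bsub>N\<^esub> f x)"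

definition mod_kernel :: "('r, 'm) module \<Rightarrow> ('r, 'n) module \<Rightarrow> ('m \<Rightarrow> 'n) \<Rightarrow> 'm set" where
  "mod_kernel M N f = {x \<in> carrier M. f x = \<zero>\<^bsub>N\<^esub>}"

definition mod_coset :: "('r, 'm) module \<Rightarrow> 'm set \<Rightarrow> 'm \<Rightarrow> 'm set" where
  "mod_coset M K x = {x \<oplus>\<^bsub>M\<^esub> k | k. k \<in> K}"

definition quotient_mod_topology :: "('r, 'm) module \<Rightarrow> 'm topology \<Rightarrow> 'm set \<Rightarrow> 'm set topology" where
  "quotient_mod_topology M TM K =
     topology (\<lambda>U. U \<subseteq> mod_coset M K ` carrier M \<and>
                    openin TM {x \<in> carrier M. mod_coset M K x \<in> U})"

definition induced_map :: "('m \<Rightarrow> 'n) \<Rightarrow> 'm set \<Rightarrow> 'n" where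
  "induced_map f C = f (SOME x. x \<in> C)"

definition strict_map ::
  "('r, 'm) module \<Rightarrow> 'm topology \<Rightarrow> ('r, 'n) module \<Rightarrow> 'n topology \<Rightarrow> ('m \<Rightarrow> 'n) \<Rightarrow> bool" where
  "strict_map M TM N TN f \<longleftrightarrow>
     homeomorphic_map (quotient_mod_topology M TM (mod_kernel M N f))
                      (subtopology TN (f ` carrier M)) (induced_map f)"

end

theory Submission
  imports Defs "HOL-Algebra.AbelCoset"
begin

text \<open>Only the additive groups of the modules matter.
  A complete t.d. module has a decreasing sequence of open subgroups \<open>V n\<close> forming a basis of
  neighbourhoods of zero, so it behaves like a complete separable ultrametric group.

  (i) By Baire category, \<open>f ` V n\<close> is dense in a neighbourhood \<open>U j\<close> of zero, and successive
  approximation, using completeness of \<open>M\<close>, gives \<open>U j \<subseteq> f ` V n\<close>. Hence \<open>f\<close> is open, so it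
  is a quotient map, which is what strictness means. A continuous section is the limit of maps
  \<open>\<sigma> k\<close> that are sections of \<open>f\<close> modulo the open subgroups \<open>f ` V k\<close> and are constant on their
  cosets.

  (ii) An injective \<open>f\<close> is strict iff it is a homeomorphism onto its image. The image is then
  complete, hence closed, and a nonempty closed set \<open>F\<close> of an ultrametric group is a retract:
  send \<open>y\<close> to a point of \<open>F\<close> as close to \<open>y\<close> as possible, chosen constant near every point
  outside \<open>F\<close>. Composing with the inverse of \<open>f\<close> gives \<open>r\<close>; conversely, \<open>r\<close> is a continuous
  inverse of \<open>f\<close> on its image.\<close>

context abelian_group
begin

lemma minus_add_minus:
  "\<lbrakk>a \<in> carrier G; b \<in> carrier G; c \<in> carrier G\<rbrakk> \<Longrightarrow> (a \<ominus> b) \<oplus> (b \<ominus> c) = a \<ominus> c"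
  by (simp add: minus_eq a_assoc[symmetric]) (simp add: a_assoc l_neg)

lemma a_inv_minus: "\<lbrakk>a \<in> carrier G; b \<in> carrier G\<rbrakk> \<Longrightarrow> \<ominus> (a \<ominus> b) = b \<ominus> a"
  by (simp add: minus_eq minus_add a_comm)

lemma minus_self [simp]: "a \<in> carrier G \<Longrightarrow> a \<ominus> a = \<zero>"
  by (simp add: minus_eq r_neg)

lemma minus_zero_right [simp]: "a \<in> carrier G \<Longrightarrow> a \<ominus> \<zero> = a"
  by (simp add: minus_eq)

lemma add_minus_cancel_left: "\<lbrakk>a \<in> carrier G; b \<in> carrier G\<rbrakk> \<Longrightarrow> (a \<oplus> b) \<ominus> a = b"
  by (simp add: minus_eq a_comm r_neg1)

lemma add_minus_cancel: "\<lbrakk>a \<in> carrier G; b \<in> carrier G\<rbrakk> \<Longrightarrow> a \<oplus> (b \<ominus> a) = b"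
  by (metis a_comm minus_closed a_assoc minus_eq a_inv_closed r_neg r_zero)

lemma minus_minus_cancel:
  assumes "a \<in> carrier G" "b \<in> carrier G" "c \<in> carrier G"
  shows "(a \<ominus> c) \<ominus> (b \<ominus> c) = a \<ominus> b"
proof -
  have "(a \<ominus> c) \<ominus> (b \<ominus> c) = (a \<ominus> b) \<ominus> (c \<ominus> c)"
    using assms by (simp add: minus_eq minus_add a_ac)
  with assms show ?thesis
    by simp
qed

lemma minus_eq_zero_iff: "\<lbrakk>a \<in> carrier G; b \<in> carrier G\<rbrakk> \<Longrightarrow> a \<ominus> b = \<zero> \<longleftrightarrow> a = b"
  by (metis add_minus_cancel minus_self)

lemma subgroup_minus_cong:
  assumes "additive_subgroup H G" "a \<in> carrier G" "b \<in> carrier G" "c \<in> carrier G" "b \<ominus> c \<in> H"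
  shows "a \<ominus> b \<in> H \<longleftrightarrow> a \<ominus> c \<in> H"
proof -
  interpret H: additive_subgroup H G by fact
  have "a \<ominus> c = (a \<ominus> b) \<oplus> (b \<ominus> c)" and "a \<ominus> b = (a \<ominus> c) \<ominus> (b \<ominus> c)"
    using assms by (simp_all add: minus_add_minus minus_minus_cancel)
  then show ?thesis
    using \<open>b \<ominus> c \<in> H\<close> by (metis H.a_closed H.a_inv_closed a_minus_def)
qed

end

lemma (in additive_subgroup) a_minus_closed: "\<lbrakk>x \<in> H; y \<in> H\<rbrakk> \<Longrightarrow> x \<ominus> y \<in> H"
  by (simp add: a_minus_def)

section \<open>Complete t.d. groups\<close>

locale subgroup_chain = abelian_group G for G :: "('a, 'b) ring_scheme" (structure) +
  fixes U :: "nat \<Rightarrow> 'a set"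
  assumes U_subgroup: "additive_subgroup (U n) G"
    and U_antimono: "m \<le> n \<Longrightarrow> U n \<subseteq> U m"
begin

lemma U_carrier: "x \<in> U n \<Longrightarrow> x \<in> carrier G"
  using additive_subgroup.a_subset[OF U_subgroup] by blast

lemma zero_in_U [simp]: "\<zero> \<in> U n"
  by (rule additive_subgroup.zero_closed[OF U_subgroup])

lemma U_add: "\<lbrakk>x \<in> U n; y \<in> U n\<rbrakk> \<Longrightarrow> x \<oplus> y \<in> U n"
  by (rule additive_subgroup.a_closed[OF U_subgroup])

lemma U_a_inv: "x \<in> U n \<Longrightarrow> \<ominus> x \<in> U n"
  by (rule additive_subgroup.a_inv_closed[OF U_subgroup])

lemma U_minus: "\<lbrakk>x \<in> U n; y \<in> U n\<rbrakk> \<Longrightarrow> x \<ominus> y \<in> U n"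
  by (rule additive_subgroup.a_minus_closed[OF U_subgroup])

lemma U_mono: "\<lbrakk>m \<le> n; x \<in> U n\<rbrakk> \<Longrightarrow> x \<in> U m"
  using U_antimono by blast

lemma U_diff_sym: "\<lbrakk>x \<in> carrier G; y \<in> carrier G; y \<ominus> x \<in> U n\<rbrakk> \<Longrightarrow> x \<ominus> y \<in> U n"
  by (metis U_a_inv a_inv_minus)

lemma U_diff_trans:
  "\<lbrakk>x \<in> carrier G; y \<in> carrier G; z \<in> carrier G; z \<ominus> y \<in> U n; y \<ominus> x \<in> U n\<rbrakk> \<Longrightarrow> z \<ominus> x \<in> U n"
  by (metis U_add minus_add_minus)

lemma U_diff_telescope:
  assumes S: "\<And>k. S k \<in> carrier G" and succ: "\<And>k. S (Suc k) \<ominus> S k \<in> U (g k)"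
    and "mono g" and "k \<le> l"
  shows "S l \<ominus> S k \<in> U (g k)"
  using \<open>k \<le> l\<close>
proof (induction l rule: dec_induct)
  case base
  show ?case using S by simp
next
  case (step m)
  have "S (Suc m) \<ominus> S m \<in> U (g k)"
    using U_mono[OF monoD[OF \<open>mono g\<close> \<open>k \<le> m\<close>] succ] .
  then show ?case
    using U_diff_trans[OF S S S _ step.IH] by blast
qed

end

text \<open>The chain \<open>U\<close> is a basis of neighbourhoods of zero, so \<open>y \<ominus> x \<in> U n\<close> plays the role of
  \<open>dist x y \<le> 2 ^ -n\<close> in an ultrametric; completeness and separability refer to this metric.\<close>

locale td_group = subgroup_chain G U for G (structure) and U +
  fixes T :: "'a topology"
  assumes topspace_eq: "topspace T = carrier G"
    and openin_iff:
      "openin T W \<longleftrightarrow> W \<subseteq> carrier G \<and> (\<forall>x\<in>W. \<exists>n. \<forall>y\<in>carrier G. y \<ominus> x \<in> U n \<longrightarrow> y \<in> W)"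
    and Inter_U: "\<lbrakk>x \<in> carrier G; \<And>n. x \<in> U n\<rbrakk> \<Longrightarrow> x = \<zero>"
    and complete: "\<lbrakk>\<And>k. S k \<in> carrier G; \<And>k l. k \<le> l \<Longrightarrow> S l \<ominus> S k \<in> U k\<rbrakk>
      \<Longrightarrow> \<exists>x\<in>carrier G. \<forall>k. x \<ominus> S k \<in> U k"
    and separable: "\<exists>D. countable D \<and> D \<subseteq> carrier G \<and> (\<forall>x\<in>carrier G. \<forall>n. \<exists>d\<in>D. d \<ominus> x \<in> U n)"
begin

lemma eq_if_diff_in_U:
  assumes "x \<in> carrier G" "y \<in> carrier G" "\<And>n. x \<ominus> y \<in> U n"
  shows "x = y"
proof -
  have "x \<ominus> y = \<zero>"
    using assms by (intro Inter_U) simp_all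
  with assms show ?thesis
    by (simp add: minus_eq_zero_iff)
qed

lemma complete_chain:
  assumes S: "\<And>k. S k \<in> carrier G" and step: "\<And>k. S (Suc k) \<ominus> S k \<in> U (g k)"
    and "mono g" and g: "\<And>k. k \<le> g k"
  shows "\<exists>x\<in>carrier G. \<forall>k. x \<ominus> S k \<in> U (g k)"
proof -
  have chain: "S l \<ominus> S k \<in> U (g k)" if "k \<le> l" for k l
    using U_diff_telescope[OF S step \<open>mono g\<close> that] .
  have cauchy: "S l \<ominus> S k \<in> U k" if "k \<le> l" for k l
    using U_mono[OF g chain[OF that]] .
  obtain x where x: "x \<in> carrier G" "\<And>k. x \<ominus> S k \<in> U k"
    using complete[OF S cauchy] by blast
  have "x \<ominus> S k \<in> U (g k)" for k
    using U_diff_trans[OF S S[of "g k"] x(1) x(2) chain[OF g]] .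
  with x(1) show ?thesis by blast
qed

lemma openin_U_ball: "x \<in> carrier G \<Longrightarrow> openin T {y \<in> carrier G. y \<ominus> x \<in> U n}"
  unfolding openin_iff using U_diff_trans by blast

lemma openin_U: "openin T (U n)"
proof -
  have "{y \<in> carrier G. y \<ominus> \<zero> \<in> U n} = U n"
    using U_carrier by auto
  then show ?thesis
    using openin_U_ball[OF zero_closed, of n] by simp
qed

definition adherent :: "'a set \<Rightarrow> 'a \<Rightarrow> bool"
  where "adherent A y \<longleftrightarrow> (\<forall>n. \<exists>a\<in>A. a \<ominus> y \<in> U n)"

lemma closedin_iff_adherent:
  "closedin T F \<longleftrightarrow> F \<subseteq> carrier G \<and> (\<forall>y\<in>carrier G. adherent F y \<longrightarrow> y \<in> F)"
proof -
  have "(\<exists>n. \<forall>y\<in>carrier G. y \<ominus> x \<in> U n \<longrightarrow> y \<in> carrier G - F) \<longleftrightarrow> \<not> adherent F x"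
    if "F \<subseteq> carrier G" for x
    using that unfolding adherent_def by auto
  then show ?thesis
    unfolding closedin_def topspace_eq openin_iff by auto
qed

lemma countable_cover_by_U_cosets:
  "\<exists>d. (\<forall>k::nat. d k \<in> carrier G) \<and> carrier G \<subseteq> (\<Union>k. {x \<in> carrier G. x \<ominus> d k \<in> U n})"
proof -
  obtain D where D: "countable D" "D \<subseteq> carrier G" "\<forall>x\<in>carrier G. \<forall>n. \<exists>d\<in>D. d \<ominus> x \<in> U n"
    using separable by blast
  then have "D \<noteq> {}"
    using zero_closed by blast
  define d where "d = from_nat_into D"
  have "d k \<in> carrier G" for k
    using from_nat_into[OF \<open>D \<noteq> {}\<close>] D(2) unfolding d_def by blast
  moreover have "x \<in> (\<Union>k. {x \<in> carrier G. x \<ominus> d k \<in> U n})" if x: "x \<in> carrier G" for x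
  proof -
    obtain e where e: "e \<in> D" "e \<ominus> x \<in> U n"
      using D(3) x by blast
    then obtain k where "d k = e"
      using from_nat_into_surj[OF D(1)] unfolding d_def by blast
    with e D(2) x show ?thesis
      using U_diff_sym by blast
  qed
  ultimately show ?thesis
    by blast
qed

lemma baire_category:
  fixes A :: "nat \<Rightarrow> 'a set"
  assumes cover: "carrier G \<subseteq> (\<Union>k. A k)"
  shows "\<exists>k z m. z \<in> carrier G \<and> (\<forall>w\<in>carrier G. w \<ominus> z \<in> U m \<longrightarrow> adherent (A k) w)"
proof (rule ccontr)
  assume nowhere_dense: "\<not> ?thesis"
  define P where "P k p \<longleftrightarrow> fst p \<in> carrier G \<and> k \<le> snd p \<and>
      (\<forall>a\<in>carrier G. a \<ominus> fst p \<in> U (snd p) \<longrightarrow> a \<notin> A k)" for k p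
  have escape: "\<exists>p. P k p \<and> fst p \<ominus> z \<in> U m \<and> m \<le> snd p" if "z \<in> carrier G" for k z m
  proof -
    obtain w where w: "w \<in> carrier G" "w \<ominus> z \<in> U m" "\<not> adherent (A k) w"
      using nowhere_dense \<open>z \<in> carrier G\<close> by blast
    then obtain i where i: "\<forall>a\<in>A k. a \<ominus> w \<notin> U i"
      unfolding adherent_def by blast
    define m' where "m' = max i (max k m)"
    have "P k (w, m')"
      unfolding P_def m'_def using w(1) i U_mono[of i "max i (max k m)"] by auto
    moreover have "m \<le> snd (w, m')"
      unfolding m'_def by simp
    ultimately show ?thesis
      using w(2) by (intro exI[of _ "(w, m')"]) simp
  qed
  have "\<exists>p. \<forall>k. P k (p k) \<and> fst (p (Suc k)) \<ominus> fst (p k) \<in> U (snd (p k)) \<and> snd (p k) \<le> snd (p (Suc k))"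
  proof (rule dependent_nat_choice)
    show "\<exists>p. P 0 p"
      using escape[OF zero_closed] by blast
    fix p k assume "P k p"
    then have "fst p \<in> carrier G"
      unfolding P_def by blast
    then show "\<exists>p'. P (Suc k) p' \<and> fst p' \<ominus> fst p \<in> U (snd p) \<and> snd p \<le> snd p'"
      using escape by blast
  qed
  then obtain p where p: "\<And>k. P k (p k)"
    and step: "\<And>k. fst (p (Suc k)) \<ominus> fst (p k) \<in> U (snd (p k))"
    and incr: "\<And>k. snd (p k) \<le> snd (p (Suc k))"
    by blast
  have "mono (\<lambda>k. snd (p k))"
    using incr by (simp add: mono_iff_le_Suc)
  moreover have "fst (p k) \<in> carrier G" "k \<le> snd (p k)" for k
    using p[of k] unfolding P_def by blast+
  ultimately obtain x where x: "x \<in> carrier G" "\<And>k. x \<ominus> fst (p k) \<in> U (snd (p k))"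
    using complete_chain[of "\<lambda>k. fst (p k)" "\<lambda>k. snd (p k)"] step by blast
  obtain k where "x \<in> A k"
    using cover x(1) by blast
  with p[of k] x show False
    unfolding P_def by blast
qed

end

lemma continuous_map_td_group_iff:
  assumes M: "td_group M V TM" and N: "td_group N U TN" and g: "g \<in> carrier N \<rightarrow> carrier M"
  shows "continuous_map TN TM g \<longleftrightarrow>
    (\<forall>x\<in>carrier N. \<forall>n. \<exists>m. \<forall>y\<in>carrier N. y \<ominus>\<^bsub>N\<^esub> x \<in> U m \<longrightarrow> g y \<ominus>\<^bsub>M\<^esub> g x \<in> V n)"
    (is "_ \<longleftrightarrow> ?near")
proof
  interpret M: td_group M V TM by fact
  interpret N: td_group N U TN by fact
  assume cont: "continuous_map TN TM g"
  show ?near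
  proof (intro ballI allI)
    fix x n assume x: "x \<in> carrier N"
    then have gx: "g x \<in> carrier M"
      using g by blast
    have "openin TN {y \<in> topspace TN. g y \<in> {z \<in> carrier M. z \<ominus>\<^bsub>M\<^esub> g x \<in> V n}}"
      using openin_continuous_map_preimage[OF cont M.openin_U_ball[OF gx]] .
    moreover have "x \<in> {y \<in> topspace TN. g y \<in> {z \<in> carrier M. z \<ominus>\<^bsub>M\<^esub> g x \<in> V n}}"
      using x gx N.topspace_eq by simp
    ultimately show "\<exists>m. \<forall>y\<in>carrier N. y \<ominus>\<^bsub>N\<^esub> x \<in> U m \<longrightarrow> g y \<ominus>\<^bsub>M\<^esub> g x \<in> V n"
      unfolding N.openin_iff by blast
  qed
next
  interpret M: td_group M V TM by fact
  interpret N: td_group N U TN by fact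
  assume near: ?near
  show "continuous_map TN TM g"
    unfolding continuous_map_def
  proof (intro conjI allI impI)
    show "g \<in> topspace TN \<rightarrow> topspace TM"
      using g M.topspace_eq N.topspace_eq by simp
    fix W assume W: "openin TM W"
    show "openin TN {x \<in> topspace TN. g x \<in> W}"
      unfolding N.openin_iff N.topspace_eq
    proof (intro conjI ballI)
      fix x assume x: "x \<in> {x \<in> carrier N. g x \<in> W}"
      then obtain n where n: "\<forall>y\<in>carrier M. y \<ominus>\<^bsub>M\<^esub> g x \<in> V n \<longrightarrow> y \<in> W"
        using W unfolding M.openin_iff by blast
      obtain m where "\<forall>y\<in>carrier N. y \<ominus>\<^bsub>N\<^esub> x \<in> U m \<longrightarrow> g y \<ominus>\<^bsub>M\<^esub> g x \<in> V n"
        using near x by blast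
      with n g show "\<exists>m. \<forall>y\<in>carrier N. y \<ominus>\<^bsub>N\<^esub> x \<in> U m \<longrightarrow> y \<in> {x \<in> carrier N. g x \<in> W}"
        by blast
    qed auto
  qed
qed

context td_group
begin

text \<open>The distance to \<open>F\<close> takes values in a discrete set, so it is attained.\<close>

definition closest_in :: "'a set \<Rightarrow> 'a \<Rightarrow> 'a \<Rightarrow> bool"
  where "closest_in F y a \<longleftrightarrow> a \<in> F \<and> (\<forall>n. (\<exists>b\<in>F. b \<ominus> y \<in> U n) \<longrightarrow> a \<ominus> y \<in> U n)"

lemma ex_closest_in:
  assumes F: "closedin T F" "F \<noteq> {}" and y: "y \<in> carrier G"
  shows "\<exists>a. closest_in F y a"
proof (cases "adherent F y")
  case True
  then have "y \<in> F"
    using F(1) y closedin_iff_adherent by blast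
  then show ?thesis
    unfolding closest_in_def using y by (intro exI[of _ y]) simp
next
  case False
  define meets where "meets n \<longleftrightarrow> (\<exists>b\<in>F. b \<ominus> y \<in> U n)" for n
  obtain i where i: "\<not> meets i"
    using False unfolding adherent_def meets_def by blast
  have meets_mono: "meets m" if "meets n" "m \<le> n" for m n
    using that U_mono unfolding meets_def by blast
  have meets_bounded: "n \<le> i" if "meets n" for n
    using meets_mono[OF that, of i] i by linarith
  show ?thesis
  proof (cases "meets 0")
    case False
    then have "\<not> meets n" for n
      using meets_mono by blast
    then show ?thesis
      using F(2) unfolding closest_in_def meets_def[symmetric] by blast
  next
    case True
    define m where "m = (GREATEST n. meets n)"
    have "meets m"
      unfolding m_def using GreatestI_nat[of meets 0 i] True meets_bounded by blast
    then obtain a where a: "a \<in> F" "a \<ominus> y \<in> U m"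
      unfolding meets_def by blast
    have "a \<ominus> y \<in> U n" if "meets n" for n
      using U_mono[OF _ a(2)] Greatest_le_nat[of meets n i] that meets_bounded unfolding m_def by blast
    with a(1) show ?thesis
      unfolding closest_in_def meets_def[symmetric] by blast
  qed
qed

lemma closest_in_self:
  assumes "F \<subseteq> carrier G" "y \<in> F" "closest_in F y a"
  shows "a = y"
proof (rule eq_if_diff_in_U)
  fix n
  have "\<exists>b\<in>F. b \<ominus> y \<in> U n"
    using assms(1,2) by (intro bexI[of _ y]) auto
  then show "a \<ominus> y \<in> U n"
    using assms(3) unfolding closest_in_def by blast
qed (use assms in \<open>auto simp: closest_in_def\<close>)

lemma closest_in_cong:
  assumes F: "F \<subseteq> carrier G" and y: "y \<in> carrier G" "y' \<in> carrier G"
    and far: "\<not> (\<exists>b\<in>F. b \<ominus> y \<in> U i)" and near: "y' \<ominus> y \<in> U i"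
  shows "closest_in F y' = closest_in F y"
proof -
  have cong: "a \<ominus> y' \<in> U n \<longleftrightarrow> a \<ominus> y \<in> U n" if "a \<in> carrier G" "n \<le> i" for a n
    using subgroup_minus_cong[OF U_subgroup that(1) y(2,1) U_mono[OF that(2) near]] .
  have meets_iff: "(\<exists>b\<in>F. b \<ominus> y' \<in> U n) \<longleftrightarrow> (\<exists>b\<in>F. b \<ominus> y \<in> U n)" for n
  proof (cases "n \<le> i")
    case True
    then show ?thesis
      using cong F by blast
  next
    case False
    then have "\<not> (\<exists>b\<in>F. b \<ominus> y \<in> U n)" and "\<not> (\<exists>b\<in>F. b \<ominus> y' \<in> U n)"
      using far cong[OF _ order_refl] F U_mono[of i n] by auto
    then show ?thesis
      by blast
  qed
  have bound: "n \<le> i" if "\<exists>b\<in>F. b \<ominus> y \<in> U n" for n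
    using that far U_mono[of i n] by (meson nat_le_linear)
  have pointwise: "((\<exists>b\<in>F. b \<ominus> y \<in> U n) \<longrightarrow> a \<ominus> y' \<in> U n) \<longleftrightarrow>
      ((\<exists>b\<in>F. b \<ominus> y \<in> U n) \<longrightarrow> a \<ominus> y \<in> U n)" if "a \<in> F" for a n
    using cong[of a n] bound[of n] that F by blast
  show ?thesis
  proof (intro ext)
    fix a
    show "closest_in F y' a = closest_in F y a"
    proof (cases "a \<in> F")
      case True
      then show ?thesis
        unfolding closest_in_def meets_iff using pointwise[OF True] by simp
    qed (simp add: closest_in_def)
  qed
qed

definition nearest_point :: "'a set \<Rightarrow> 'a \<Rightarrow> 'a"
  where "nearest_point F y = (SOME a. closest_in F y a)"

lemma closest_in_nearest_point:
  assumes "closedin T F" "F \<noteq> {}" "y \<in> carrier G"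
  shows "closest_in F y (nearest_point F y)"
  unfolding nearest_point_def using ex_closest_in[OF assms] by (rule someI_ex)

lemma continuous_map_nearest_point:
  assumes F: "closedin T F" "F \<noteq> {}"
  shows "continuous_map T T (nearest_point F)"
proof -
  have F_carrier: "F \<subseteq> carrier G"
    using F(1) closedin_iff_adherent by blast
  have closest: "closest_in F y (nearest_point F y)" if "y \<in> carrier G" for y
    using closest_in_nearest_point[OF F that] .
  then have closest_carrier: "nearest_point F y \<in> carrier G" if "y \<in> carrier G" for y
    using that F_carrier unfolding closest_in_def by blast
  then have into: "nearest_point F \<in> carrier G \<rightarrow> carrier G"
    by blast
  show ?thesis
    unfolding continuous_map_td_group_iff[OF td_group_axioms td_group_axioms into]
  proof (intro ballI allI)
    fix y n assume y: "y \<in> carrier G"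
    show "\<exists>m. \<forall>y'\<in>carrier G. y' \<ominus> y \<in> U m \<longrightarrow> nearest_point F y' \<ominus> nearest_point F y \<in> U n"
    proof (cases "y \<in> F")
      case True
      have "nearest_point F y' \<ominus> nearest_point F y \<in> U n" if y': "y' \<in> carrier G" "y' \<ominus> y \<in> U n" for y'
      proof -
        have "\<exists>b\<in>F. b \<ominus> y' \<in> U n"
          using True U_diff_sym[OF y y'(1) y'(2)] by blast
        then have "nearest_point F y' \<ominus> y' \<in> U n"
          using closest[OF y'(1)] unfolding closest_in_def by blast
        then have "nearest_point F y' \<ominus> y \<in> U n"
          using U_diff_trans[OF y y'(1) closest_carrier[OF y'(1)] _ y'(2)] by blast
        then show ?thesis
          using closest_in_self[OF F_carrier True closest[OF y]] by simp
      qed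
      then show ?thesis
        by blast
    next
      case False
      then have "\<not> adherent F y"
        using F(1) y closedin_iff_adherent by blast
      then obtain i where i: "\<not> (\<exists>b\<in>F. b \<ominus> y \<in> U i)"
        unfolding adherent_def by blast
      have "nearest_point F y' = nearest_point F y" if "y' \<in> carrier G" "y' \<ominus> y \<in> U i" for y'
        unfolding nearest_point_def using closest_in_cong[OF F_carrier y that(1) i that(2)] by simp
      then show ?thesis
        using closest_carrier[OF y] by (intro exI[of _ i]) auto
    qed
  qed
qed

lemma closedin_retract_of_space:
  assumes F: "closedin T F" "F \<noteq> {}"
  shows "F retract_of_space T"
proof -
  have F_carrier: "F \<subseteq> carrier G"
    using F(1) closedin_iff_adherent by blast
  have "nearest_point F y \<in> F" if "y \<in> carrier G" for y
    using closest_in_nearest_point[OF F that] unfolding closest_in_def by blast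
  moreover have "nearest_point F y = y" if "y \<in> F" for y
    using closest_in_self[OF F_carrier that closest_in_nearest_point[OF F]] that F_carrier by blast
  ultimately show ?thesis
    unfolding retract_of_space_def using F_carrier continuous_map_nearest_point[OF F]
    by (auto intro!: exI[of _ "nearest_point F"] continuous_map_into_subtopology simp: topspace_eq)
qed

end

section \<open>Continuous homomorphisms\<close>

locale td_hom = M: td_group M V TM + N: td_group N U TN + abelian_group_hom M N f
  for M V TM N U TN f +
  assumes continuous: "continuous_map TM TN f"
begin

lemma hom_minus: "\<lbrakk>x \<in> carrier M; y \<in> carrier M\<rbrakk> \<Longrightarrow> f (x \<ominus>\<^bsub>M\<^esub> y) = f x \<ominus>\<^bsub>N\<^esub> f y"
  by (simp add: M.minus_eq N.minus_eq)

lemma image_V_subgroup: "additive_subgroup (f ` V n) N"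
  using group_hom.subgroup_img_is_subgroup[OF a_group_hom] M.U_subgroup
  by (simp add: additive_subgroup_def)

lemma continuous_at_zero: "\<exists>m. f ` V m \<subseteq> U n"
proof -
  have "f \<in> carrier M \<rightarrow> carrier N"
    by simp
  then have "\<forall>x\<in>carrier M. \<forall>n. \<exists>m. \<forall>y\<in>carrier M. y \<ominus>\<^bsub>M\<^esub> x \<in> V m \<longrightarrow> f y \<ominus>\<^bsub>N\<^esub> f x \<in> U n"
    using continuous continuous_map_td_group_iff[OF N.td_group_axioms M.td_group_axioms] by blast
  then obtain m where "\<forall>y\<in>carrier M. y \<ominus>\<^bsub>M\<^esub> \<zero>\<^bsub>M\<^esub> \<in> V m \<longrightarrow> f y \<ominus>\<^bsub>N\<^esub> f \<zero>\<^bsub>M\<^esub> \<in> U n"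
    using M.zero_closed by blast
  then have "f ` V m \<subseteq> U n"
    using M.U_carrier by auto
  then show ?thesis ..
qed

lemma limit_image_eq:
  assumes x: "x \<in> carrier M" and y: "y \<in> carrier N" and S: "\<And>k. S k \<in> carrier M"
    and lim: "\<And>k. x \<ominus>\<^bsub>M\<^esub> S k \<in> V k" and image_lim: "\<And>k. f (S k) \<ominus>\<^bsub>N\<^esub> y \<in> U k"
  shows "f x = y"
proof (rule N.eq_if_diff_in_U)
  fix n
  obtain m where m: "f ` V m \<subseteq> U n"
    using continuous_at_zero by blast
  define k where "k = max m n"
  have "f x \<ominus>\<^bsub>N\<^esub> f (S k) \<in> U n"
    using m M.U_mono[of m k] lim[of k] x S by (auto simp: k_def hom_minus[symmetric])
  moreover have "f (S k) \<ominus>\<^bsub>N\<^esub> y \<in> U n"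
    using N.U_mono[of n k] image_lim[of k] by (simp add: k_def)
  ultimately show "f x \<ominus>\<^bsub>N\<^esub> y \<in> U n"
    using N.U_diff_trans[of y "f (S k)" "f x"] x y S by simp
qed (use x y in simp_all)

lemma adherent_image_V_if_dense_near:
  assumes z: "z \<in> carrier N" and d: "d \<in> carrier M" and y: "y \<in> U j"
    and dense: "\<And>w. \<lbrakk>w \<in> carrier N; w \<ominus>\<^bsub>N\<^esub> z \<in> U j\<rbrakk> \<Longrightarrow>
      N.adherent (f ` {x \<in> carrier M. x \<ominus>\<^bsub>M\<^esub> d \<in> V n}) w"
  shows "N.adherent (f ` V n) y"
  unfolding N.adherent_def
proof
  fix i
  have yc: "y \<in> carrier N"
    using y by (rule N.U_carrier)
  have "(z \<oplus>\<^bsub>N\<^esub> y) \<ominus>\<^bsub>N\<^esub> z \<in> U j"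
    using N.add_minus_cancel_left[OF z yc] y by simp
  then have "N.adherent (f ` {x \<in> carrier M. x \<ominus>\<^bsub>M\<^esub> d \<in> V n}) (z \<oplus>\<^bsub>N\<^esub> y)"
    using dense z yc by simp
  then obtain x1 where x1: "x1 \<in> carrier M" "x1 \<ominus>\<^bsub>M\<^esub> d \<in> V n" "f x1 \<ominus>\<^bsub>N\<^esub> (z \<oplus>\<^bsub>N\<^esub> y) \<in> U i"
    unfolding N.adherent_def by blast
  have "N.adherent (f ` {x \<in> carrier M. x \<ominus>\<^bsub>M\<^esub> d \<in> V n}) z"
    using dense z by simp
  then obtain x2 where x2: "x2 \<in> carrier M" "x2 \<ominus>\<^bsub>M\<^esub> d \<in> V n" "f x2 \<ominus>\<^bsub>N\<^esub> z \<in> U i"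
    unfolding N.adherent_def by blast
  have "x1 \<ominus>\<^bsub>M\<^esub> x2 \<in> V n"
    using M.U_minus[OF x1(2) x2(2)] M.minus_minus_cancel[OF x1(1) x2(1) d] by simp
  moreover have "(f x1 \<ominus>\<^bsub>N\<^esub> (z \<oplus>\<^bsub>N\<^esub> y)) \<ominus>\<^bsub>N\<^esub> (f x2 \<ominus>\<^bsub>N\<^esub> z) =
      (f (x1 \<ominus>\<^bsub>M\<^esub> x2) \<ominus>\<^bsub>N\<^esub> y) \<oplus>\<^bsub>N\<^esub> (z \<ominus>\<^bsub>N\<^esub> z)"
    using x1 x2 z yc by (simp add: hom_minus N.minus_eq N.minus_add N.a_ac)
  ultimately show "\<exists>a\<in>f ` V n. a \<ominus>\<^bsub>N\<^esub> y \<in> U i"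
    using N.U_minus[OF x1(3) x2(3)] x1(1) x2(1) z yc by auto
qed

lemma approximating_sequence:
  assumes dense: "\<And>m. \<forall>y\<in>U (j m). N.adherent (f ` V m) y" and y: "y \<in> U (j n)"
  shows "\<exists>S. \<forall>k. (S k \<in> V n \<and> y \<ominus>\<^bsub>N\<^esub> f (S k) \<in> U (j (n + k))) \<and> S (Suc k) \<ominus>\<^bsub>M\<^esub> S k \<in> V (n + k)"
proof (rule dependent_nat_choice)
  have "y \<in> carrier N"
    using y by (rule N.U_carrier)
  with y show "\<exists>s. s \<in> V n \<and> y \<ominus>\<^bsub>N\<^esub> f s \<in> U (j (n + 0))"
    by (intro exI[of _ "\<zero>\<^bsub>M\<^esub>"]) simp
next
  fix s k assume s: "s \<in> V n \<and> y \<ominus>\<^bsub>N\<^esub> f s \<in> U (j (n + k))"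
  then obtain t where t: "t \<in> V (n + k)" "f t \<ominus>\<^bsub>N\<^esub> (y \<ominus>\<^bsub>N\<^esub> f s) \<in> U (j (n + Suc k))"
    using dense unfolding N.adherent_def by blast
  have sc: "s \<in> carrier M" and tc: "t \<in> carrier M" and yc: "y \<in> carrier N"
    using s t(1) y M.U_carrier N.U_carrier by blast+
  have "\<ominus>\<^bsub>N\<^esub> (f t \<ominus>\<^bsub>N\<^esub> (y \<ominus>\<^bsub>N\<^esub> f s)) = (y \<ominus>\<^bsub>N\<^esub> f s) \<ominus>\<^bsub>N\<^esub> f t"
    using sc tc yc by (simp add: N.a_inv_minus)
  also have "\<dots> = y \<ominus>\<^bsub>N\<^esub> f (s \<oplus>\<^bsub>M\<^esub> t)"
    using sc tc yc by (simp add: N.minus_eq N.minus_add N.a_ac)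
  finally have "y \<ominus>\<^bsub>N\<^esub> f (s \<oplus>\<^bsub>M\<^esub> t) \<in> U (j (n + Suc k))"
    using N.U_a_inv[OF t(2)] by simp
  moreover have "s \<oplus>\<^bsub>M\<^esub> t \<in> V n"
    using M.U_add[OF conjunct1[OF s] M.U_mono[OF _ t(1)]] by simp
  moreover have "(s \<oplus>\<^bsub>M\<^esub> t) \<ominus>\<^bsub>M\<^esub> s \<in> V (n + k)"
    using M.add_minus_cancel_left[OF sc tc] t(1) by simp
  ultimately show "\<exists>s'. (s' \<in> V n \<and> y \<ominus>\<^bsub>N\<^esub> f s' \<in> U (j (n + Suc k))) \<and> s' \<ominus>\<^bsub>M\<^esub> s \<in> V (n + k)"
    by blast
qed

lemma U_subset_image_V_if_dense:
  assumes dense: "\<And>m. \<forall>y\<in>U (j m). N.adherent (f ` V m) y" and j: "\<And>m. m \<le> j m"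
  shows "U (j n) \<subseteq> f ` V n"
proof
  fix y assume y: "y \<in> U (j n)"
  then have yc: "y \<in> carrier N"
    by (rule N.U_carrier)
  obtain S where S_V: "\<And>k. S k \<in> V n" and S_near: "\<And>k. y \<ominus>\<^bsub>N\<^esub> f (S k) \<in> U (j (n + k))"
    and S_step: "\<And>k. S (Suc k) \<ominus>\<^bsub>M\<^esub> S k \<in> V (n + k)"
    using approximating_sequence[OF dense y] by blast
  have S: "S k \<in> carrier M" for k
    using S_V M.U_carrier by blast
  obtain x where x: "x \<in> carrier M" "\<And>k. x \<ominus>\<^bsub>M\<^esub> S k \<in> V (n + k)"
    using M.complete_chain[of S "\<lambda>k. n + k", OF S S_step] by (auto simp: mono_def)
  have "S 0 \<oplus>\<^bsub>M\<^esub> (x \<ominus>\<^bsub>M\<^esub> S 0) \<in> V n"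
    using M.U_add[OF S_V x(2)[of 0, simplified]] .
  then have "x \<in> V n"
    using M.add_minus_cancel[OF S x(1)] by simp
  moreover have "f x = y"
  proof (rule limit_image_eq[OF x(1) yc S])
    show "x \<ominus>\<^bsub>M\<^esub> S k \<in> V k" for k
      using x(2) M.U_mono[of k "n + k"] by simp
    show "f (S k) \<ominus>\<^bsub>N\<^esub> y \<in> U k" for k
      using N.U_diff_sym[OF _ yc N.U_mono[OF _ S_near]] S j[of "n + k"] by simp
  qed
  ultimately show "y \<in> f ` V n"
    by blast
qed

end

locale td_surj_hom = td_hom +
  assumes surjective: "f ` carrier M = carrier N"
begin

lemma image_V_dense_near_zero: "\<exists>j. \<forall>y\<in>U j. N.adherent (f ` V n) y"
proof -
  obtain d :: "nat \<Rightarrow> _" where d: "\<And>k. d k \<in> carrier M"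
    and cover: "carrier M \<subseteq> (\<Union>k. {x \<in> carrier M. x \<ominus>\<^bsub>M\<^esub> d k \<in> V n})"
    using M.countable_cover_by_U_cosets by blast
  define A where "A k = f ` {x \<in> carrier M. x \<ominus>\<^bsub>M\<^esub> d k \<in> V n}" for k
  have "carrier N \<subseteq> (\<Union>k. A k)"
  proof
    fix y assume "y \<in> carrier N"
    then obtain x where x: "x \<in> carrier M" "y = f x"
      using surjective by blast
    then obtain k where "x \<ominus>\<^bsub>M\<^esub> d k \<in> V n"
      using cover by blast
    with x show "y \<in> (\<Union>k. A k)"
      unfolding A_def by blast
  qed
  then obtain k z j where z: "z \<in> carrier N"
    and dense: "\<forall>w\<in>carrier N. w \<ominus>\<^bsub>N\<^esub> z \<in> U j \<longrightarrow> N.adherent (A k) w"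
    using N.baire_category[of A] by blast
  then have "N.adherent (f ` V n) y" if "y \<in> U j" for y
    using adherent_image_V_if_dense_near[OF z d that] unfolding A_def by blast
  then show ?thesis
    by blast
qed

lemma U_subset_image_V: "\<exists>j. U j \<subseteq> f ` V n"
proof -
  obtain j where "\<And>m. \<forall>y\<in>U (j m). N.adherent (f ` V m) y"
    using image_V_dense_near_zero by metis
  then have "\<forall>y\<in>U (max (j m) m). N.adherent (f ` V m) y" for m
    using N.U_mono[of "j m" "max (j m) m"] by simp
  then have "U (max (j n) n) \<subseteq> f ` V n"
    by (rule U_subset_image_V_if_dense) simp
  then show ?thesis ..
qed

lemma open_map_hom: "open_map TM TN f"
  unfolding open_map_def
proof (intro allI impI)
  fix W assume W: "openin TM W"
  then have Wc: "W \<subseteq> carrier M"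
    unfolding M.openin_iff by blast
  show "openin TN (f ` W)"
    unfolding N.openin_iff
  proof (intro conjI ballI)
    show "f ` W \<subseteq> carrier N"
      using Wc by auto
    fix y assume "y \<in> f ` W"
    then obtain x where x: "x \<in> W" "y = f x"
      by blast
    then have xc: "x \<in> carrier M"
      using Wc by blast
    obtain n where n: "\<forall>z\<in>carrier M. z \<ominus>\<^bsub>M\<^esub> x \<in> V n \<longrightarrow> z \<in> W"
      using W x(1) unfolding M.openin_iff by blast
    obtain j where j: "U j \<subseteq> f ` V n"
      using U_subset_image_V by blast
    have "y' \<in> f ` W" if y': "y' \<in> carrier N" "y' \<ominus>\<^bsub>N\<^esub> y \<in> U j" for y'
    proof -
      have "y' \<ominus>\<^bsub>N\<^esub> f x \<in> f ` V n"
        using j y'(2) unfolding x(2) by blast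
      then obtain v where v: "v \<in> V n" "f v = y' \<ominus>\<^bsub>N\<^esub> f x"
        by (metis imageE)
      have vc: "v \<in> carrier M"
        using v(1) by (rule M.U_carrier)
      have "x \<oplus>\<^bsub>M\<^esub> v \<in> W"
        using n v(1) M.add_minus_cancel_left[OF xc vc] xc vc by simp
      moreover have "f (x \<oplus>\<^bsub>M\<^esub> v) = y'"
        using v(2) N.add_minus_cancel[OF _ y'(1)] xc vc by simp
      ultimately show ?thesis
        by (metis image_eqI)
    qed
    then show "\<exists>m. \<forall>y'\<in>carrier N. y' \<ominus>\<^bsub>N\<^esub> y \<in> U m \<longrightarrow> y' \<in> f ` W"
      by blast
  qed
qed

lemma quotient_map_hom: "quotient_map TM TN f"
  using continuous_open_imp_quotient_map[OF continuous open_map_hom] surjective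
  by (simp add: M.topspace_eq N.topspace_eq)

definition approximate_section
  where "approximate_section k \<sigma> \<longleftrightarrow>
    (\<forall>y\<in>carrier N. \<sigma> y \<in> carrier M \<and> f (\<sigma> y) \<ominus>\<^bsub>N\<^esub> y \<in> f ` V k) \<and>
    (\<forall>y\<in>carrier N. \<forall>y'\<in>carrier N. y' \<ominus>\<^bsub>N\<^esub> y \<in> f ` V k \<longrightarrow> \<sigma> y' = \<sigma> y)"

lemma approximate_section_0: "\<exists>\<sigma>. approximate_section 0 \<sigma>"
proof -
  define \<sigma> where "\<sigma> y = (SOME x. x \<in> carrier M \<and> f x \<ominus>\<^bsub>N\<^esub> y \<in> f ` V 0)" for y
  have "\<sigma> y \<in> carrier M \<and> f (\<sigma> y) \<ominus>\<^bsub>N\<^esub> y \<in> f ` V 0" if "y \<in> carrier N" for y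
  proof -
    have "y \<in> f ` carrier M"
      using surjective that by simp
    then obtain x where "x \<in> carrier M" "y = f x"
      by blast
    then have "\<exists>x. x \<in> carrier M \<and> f x \<ominus>\<^bsub>N\<^esub> y \<in> f ` V 0"
      using additive_subgroup.zero_closed[OF image_V_subgroup] by auto
    then show ?thesis
      unfolding \<sigma>_def by (rule someI_ex)
  qed
  moreover have "\<sigma> y' = \<sigma> y" if y: "y \<in> carrier N" "y' \<in> carrier N" "y' \<ominus>\<^bsub>N\<^esub> y \<in> f ` V 0" for y y'
  proof -
    have "f x \<ominus>\<^bsub>N\<^esub> y' \<in> f ` V 0 \<longleftrightarrow> f x \<ominus>\<^bsub>N\<^esub> y \<in> f ` V 0" if "x \<in> carrier M" for x
      using N.subgroup_minus_cong[OF image_V_subgroup _ y(2,1,3)] that by simp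
    then have "(x \<in> carrier M \<and> f x \<ominus>\<^bsub>N\<^esub> y' \<in> f ` V 0) \<longleftrightarrow> (x \<in> carrier M \<and> f x \<ominus>\<^bsub>N\<^esub> y \<in> f ` V 0)"
      for x
      by blast
    then show ?thesis
      unfolding \<sigma>_def by (simp only:)
  qed
  ultimately show ?thesis
    unfolding approximate_section_def by (intro exI[of _ \<sigma>]) blast
qed

lemma approximate_section_Suc:
  assumes \<sigma>: "approximate_section k \<sigma>"
  shows "\<exists>\<sigma>'. approximate_section (Suc k) \<sigma>' \<and> (\<forall>y\<in>carrier N. \<sigma>' y \<ominus>\<^bsub>M\<^esub> \<sigma> y \<in> V k)"
proof -
  define \<sigma>' where "\<sigma>' y = (SOME x. x \<in> carrier M \<and> x \<ominus>\<^bsub>M\<^esub> \<sigma> y \<in> V k \<and> f x \<ominus>\<^bsub>N\<^esub> y \<in> f ` V (Suc k))"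
    for y
  have \<sigma>_carrier: "\<sigma> y \<in> carrier M" and \<sigma>_near: "f (\<sigma> y) \<ominus>\<^bsub>N\<^esub> y \<in> f ` V k" if "y \<in> carrier N" for y
    using \<sigma> that unfolding approximate_section_def by blast+
  have "\<sigma>' y \<in> carrier M \<and> \<sigma>' y \<ominus>\<^bsub>M\<^esub> \<sigma> y \<in> V k \<and> f (\<sigma>' y) \<ominus>\<^bsub>N\<^esub> y \<in> f ` V (Suc k)"
    if y: "y \<in> carrier N" for y
  proof -
    have "y \<ominus>\<^bsub>N\<^esub> f (\<sigma> y) \<in> f ` V k"
      using additive_subgroup.a_inv_closed[OF image_V_subgroup \<sigma>_near[OF y]] \<sigma>_carrier[OF y] y
      by (simp add: N.a_inv_minus)
    then obtain v where v: "v \<in> V k" "f v = y \<ominus>\<^bsub>N\<^esub> f (\<sigma> y)"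
      by (metis imageE)
    have vc: "v \<in> carrier M"
      using v(1) by (rule M.U_carrier)
    have "f (\<sigma> y \<oplus>\<^bsub>M\<^esub> v) = y"
      using v(2) N.add_minus_cancel y \<sigma>_carrier[OF y] vc by simp
    moreover have "(\<sigma> y \<oplus>\<^bsub>M\<^esub> v) \<ominus>\<^bsub>M\<^esub> \<sigma> y = v"
      using M.add_minus_cancel_left \<sigma>_carrier[OF y] vc by simp
    ultimately have "\<exists>x. x \<in> carrier M \<and> x \<ominus>\<^bsub>M\<^esub> \<sigma> y \<in> V k \<and> f x \<ominus>\<^bsub>N\<^esub> y \<in> f ` V (Suc k)"
      using v(1) vc \<sigma>_carrier[OF y] y additive_subgroup.zero_closed[OF image_V_subgroup]
      by (intro exI[of _ "\<sigma> y \<oplus>\<^bsub>M\<^esub> v"]) simp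
    then show ?thesis
      unfolding \<sigma>'_def by (rule someI_ex)
  qed
  moreover have "\<sigma>' y' = \<sigma>' y"
    if y: "y \<in> carrier N" "y' \<in> carrier N" "y' \<ominus>\<^bsub>N\<^esub> y \<in> f ` V (Suc k)" for y y'
  proof -
    have "f ` V (Suc k) \<subseteq> f ` V k"
      using M.U_antimono[of k "Suc k"] by (simp add: image_mono)
    then have "\<sigma> y' = \<sigma> y"
      using \<sigma> y unfolding approximate_section_def by blast
    moreover have "f x \<ominus>\<^bsub>N\<^esub> y' \<in> f ` V (Suc k) \<longleftrightarrow> f x \<ominus>\<^bsub>N\<^esub> y \<in> f ` V (Suc k)" if "x \<in> carrier M" for x
      using N.subgroup_minus_cong[OF image_V_subgroup _ y(2,1,3)] that by simp
    ultimately have "(x \<in> carrier M \<and> x \<ominus>\<^bsub>M\<^esub> \<sigma> y' \<in> V k \<and> f x \<ominus>\<^bsub>N\<^esub> y' \<in> f ` V (Suc k)) \<longleftrightarrow>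
        (x \<in> carrier M \<and> x \<ominus>\<^bsub>M\<^esub> \<sigma> y \<in> V k \<and> f x \<ominus>\<^bsub>N\<^esub> y \<in> f ` V (Suc k))" for x
      by (cases "x \<in> carrier M") simp_all
    then show ?thesis
      unfolding \<sigma>'_def by (simp only:)
  qed
  ultimately show ?thesis
    unfolding approximate_section_def by (intro exI[of _ \<sigma>']) blast
qed

lemma limit_of_approximate_sections:
  assumes \<sigma>: "\<And>k. approximate_section k (\<sigma> k)"
    and s: "\<And>y. y \<in> carrier N \<Longrightarrow> s y \<in> carrier M"
    and s_lim: "\<And>y k. y \<in> carrier N \<Longrightarrow> s y \<ominus>\<^bsub>M\<^esub> \<sigma> k y \<in> V k"
  shows "continuous_map TN TM s \<and> (\<forall>y\<in>carrier N. f (s y) = y)"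
proof -
  have \<sigma>_carrier: "\<sigma> k y \<in> carrier M" and \<sigma>_near: "f (\<sigma> k y) \<ominus>\<^bsub>N\<^esub> y \<in> f ` V k"
    and \<sigma>_const: "\<And>y'. \<lbrakk>y' \<in> carrier N; y' \<ominus>\<^bsub>N\<^esub> y \<in> f ` V k\<rbrakk> \<Longrightarrow> \<sigma> k y' = \<sigma> k y"
    if "y \<in> carrier N" for k y
    using \<sigma>[of k] that unfolding approximate_section_def by blast+
  have right_inverse: "f (s y) = y" if y: "y \<in> carrier N" for y
  proof (rule N.eq_if_diff_in_U)
    fix n
    obtain m where m: "f ` V m \<subseteq> U n"
      using continuous_at_zero by blast
    have "f (s y) \<ominus>\<^bsub>N\<^esub> y = f (s y \<ominus>\<^bsub>M\<^esub> \<sigma> m y) \<oplus>\<^bsub>N\<^esub> (f (\<sigma> m y) \<ominus>\<^bsub>N\<^esub> y)"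
      using s[OF y] \<sigma>_carrier[OF y] y by (simp add: hom_minus N.minus_add_minus)
    also have "\<dots> \<in> f ` V m"
      using additive_subgroup.a_closed[OF image_V_subgroup] s_lim[OF y] \<sigma>_near[OF y] by blast
    finally show "f (s y) \<ominus>\<^bsub>N\<^esub> y \<in> U n"
      using m by blast
  qed (use s y in simp_all)
  have s_fun: "s \<in> carrier N \<rightarrow> carrier M"
    using s by blast
  have "continuous_map TN TM s"
    unfolding continuous_map_td_group_iff[OF M.td_group_axioms N.td_group_axioms s_fun]
  proof (intro ballI allI)
    fix y n assume y: "y \<in> carrier N"
    obtain j where j: "U j \<subseteq> f ` V n"
      using U_subset_image_V by blast
    have "s y' \<ominus>\<^bsub>M\<^esub> s y \<in> V n" if y': "y' \<in> carrier N" "y' \<ominus>\<^bsub>N\<^esub> y \<in> U j" for y'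
    proof -
      have "\<sigma> n y' = \<sigma> n y"
        using \<sigma>_const[OF y y'(1)] y'(2) j by blast
      then have "s y' \<ominus>\<^bsub>M\<^esub> s y = (s y' \<ominus>\<^bsub>M\<^esub> \<sigma> n y') \<ominus>\<^bsub>M\<^esub> (s y \<ominus>\<^bsub>M\<^esub> \<sigma> n y)"
        using M.minus_minus_cancel s y y' \<sigma>_carrier by simp
      then show ?thesis
        using M.U_minus s_lim y y'(1) by simp
    qed
    then show "\<exists>m. \<forall>y'\<in>carrier N. y' \<ominus>\<^bsub>N\<^esub> y \<in> U m \<longrightarrow> s y' \<ominus>\<^bsub>M\<^esub> s y \<in> V n"
      by blast
  qed
  with right_inverse show ?thesis
    by blast
qed

lemma continuous_section: "\<exists>s. continuous_map TN TM s \<and> (\<forall>y\<in>carrier N. f (s y) = y)"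
proof -
  obtain \<sigma> where \<sigma>: "\<And>k. approximate_section k (\<sigma> k)"
    and \<sigma>_step: "\<And>k. \<forall>y\<in>carrier N. \<sigma> (Suc k) y \<ominus>\<^bsub>M\<^esub> \<sigma> k y \<in> V k"
    using dependent_nat_choice[of approximate_section "\<lambda>k \<sigma> \<sigma>'. \<forall>y\<in>carrier N. \<sigma>' y \<ominus>\<^bsub>M\<^esub> \<sigma> y \<in> V k"]
      approximate_section_0 approximate_section_Suc by blast
  have "\<sigma> k y \<in> carrier M" if "y \<in> carrier N" for k y
    using \<sigma>[of k] that unfolding approximate_section_def by blast
  then have "\<exists>x\<in>carrier M. \<forall>k. x \<ominus>\<^bsub>M\<^esub> \<sigma> k y \<in> V k" if "y \<in> carrier N" for y
    using M.complete_chain[of "\<lambda>k. \<sigma> k y" id] \<sigma>_step that by (simp add: mono_def)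
  then obtain s where "\<And>y. y \<in> carrier N \<Longrightarrow> s y \<in> carrier M"
    and "\<And>y k. y \<in> carrier N \<Longrightarrow> s y \<ominus>\<^bsub>M\<^esub> \<sigma> k y \<in> V k"
    by metis
  then show ?thesis
    using limit_of_approximate_sections[OF \<sigma>] by blast
qed

end

context td_hom
begin

lemma preimage_U_subset_V:
  assumes "homeomorphic_map TM (subtopology TN (f ` carrier M)) f"
  shows "\<exists>j. {x \<in> carrier M. f x \<in> U j} \<subseteq> V n"
proof -
  have "openin (subtopology TN (f ` carrier M)) (f ` V n)"
    using homeomorphic_imp_open_map[OF assms] M.openin_U unfolding open_map_def by blast
  then obtain W where W: "openin TN W" "f ` V n = W \<inter> f ` carrier M"
    unfolding openin_subtopology by blast
  have "\<zero>\<^bsub>N\<^esub> \<in> f ` V n"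
    using hom_zero M.zero_in_U by (metis image_eqI)
  then have "\<zero>\<^bsub>N\<^esub> \<in> W"
    using W(2) by blast
  then obtain j where j: "\<forall>y\<in>carrier N. y \<ominus>\<^bsub>N\<^esub> \<zero>\<^bsub>N\<^esub> \<in> U j \<longrightarrow> y \<in> W"
    using W(1) unfolding N.openin_iff by blast
  have inj: "inj_on f (carrier M)"
    using homeomorphic_imp_injective_map[OF assms] by (simp add: M.topspace_eq)
  have "x \<in> V n" if x: "x \<in> carrier M" "f x \<in> U j" for x
  proof -
    have "f x \<in> f ` V n"
      using j x W(2) by simp
    then obtain v where v: "v \<in> V n" "f x = f v"
      by blast
    then have "x = v"
      using inj x(1) M.U_carrier[OF v(1)] by (simp add: inj_on_eq_iff)
    with v(1) show ?thesis
      by simp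
  qed
  then show ?thesis
    by blast
qed

lemma closedin_image:
  assumes embedding: "\<And>n. \<exists>j. {x \<in> carrier M. f x \<in> U j} \<subseteq> V n"
  shows "closedin TN (f ` carrier M)"
  unfolding N.closedin_iff_adherent
proof (intro conjI ballI impI)
  show "f ` carrier M \<subseteq> carrier N"
    by auto
  fix y assume y: "y \<in> carrier N" and "N.adherent (f ` carrier M) y"
  then have near: "\<exists>x. x \<in> carrier M \<and> f x \<ominus>\<^bsub>N\<^esub> y \<in> U m" for m
    unfolding N.adherent_def by blast
  obtain jr where jr: "\<And>n. {x \<in> carrier M. f x \<in> U (jr n)} \<subseteq> V n"
    using embedding by metis
  define P where "P k x \<longleftrightarrow> x \<in> carrier M \<and> f x \<ominus>\<^bsub>N\<^esub> y \<in> U (max k (jr k))" for k x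
  have "\<exists>S. \<forall>k. P k (S k) \<and> S (Suc k) \<ominus>\<^bsub>M\<^esub> S k \<in> V k"
  proof (rule dependent_nat_choice)
    show "\<exists>x. P 0 x"
      using near unfolding P_def by blast
    fix x k assume "P k x"
    then have x: "x \<in> carrier M" "f x \<ominus>\<^bsub>N\<^esub> y \<in> U (jr k)"
      unfolding P_def using N.U_mono[of "jr k" "max k (jr k)"] by auto
    obtain x' where x': "x' \<in> carrier M" "f x' \<ominus>\<^bsub>N\<^esub> y \<in> U (max (Suc k) (max (jr (Suc k)) (jr k)))"
      using near by blast
    have "P (Suc k) x'"
      unfolding P_def using x'(1) N.U_mono[OF _ x'(2), of "max (Suc k) (jr (Suc k))"] by simp
    moreover have "f (x' \<ominus>\<^bsub>M\<^esub> x) = (f x' \<ominus>\<^bsub>N\<^esub> y) \<ominus>\<^bsub>N\<^esub> (f x \<ominus>\<^bsub>N\<^esub> y)"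
      using x x' y by (simp add: hom_minus N.minus_minus_cancel)
    then have "f (x' \<ominus>\<^bsub>M\<^esub> x) \<in> U (jr k)"
      using N.U_minus[OF N.U_mono[OF _ x'(2)] x(2)] by simp
    then have "x' \<ominus>\<^bsub>M\<^esub> x \<in> V k"
      using jr x'(1) x(1) by blast
    ultimately show "\<exists>x'. P (Suc k) x' \<and> x' \<ominus>\<^bsub>M\<^esub> x \<in> V k"
      by blast
  qed
  then obtain S where S_P: "\<And>k. P k (S k)" and S_step: "\<And>k. S (Suc k) \<ominus>\<^bsub>M\<^esub> S k \<in> V k"
    by blast
  have S: "S k \<in> carrier M" and S_near: "f (S k) \<ominus>\<^bsub>N\<^esub> y \<in> U k" for k
    using S_P[of k] N.U_mono[of k "max k (jr k)"] unfolding P_def by auto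
  obtain x where x: "x \<in> carrier M" "\<And>k. x \<ominus>\<^bsub>M\<^esub> S k \<in> V k"
    using M.complete_chain[of S id] S S_step by (auto simp: mono_def)
  then have "f x = y"
    using limit_image_eq[OF x(1) y S x(2) S_near] by simp
  with x(1) show "y \<in> f ` carrier M"
    by blast
qed

lemma homeomorphic_map_iff_retraction:
  "homeomorphic_map TM (subtopology TN (f ` carrier M)) f \<longleftrightarrow>
    (\<exists>r. continuous_map TN TM r \<and> (\<forall>x\<in>carrier M. r (f x) = x))"
proof
  assume homeo: "homeomorphic_map TM (subtopology TN (f ` carrier M)) f"
  then obtain g where g: "homeomorphic_maps TM (subtopology TN (f ` carrier M)) f g"
    by (auto simp: homeomorphic_map_maps)
  have "closedin TN (f ` carrier M)"
    using closedin_image preimage_U_subset_V[OF homeo] by blast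
  moreover have "f ` carrier M \<noteq> {}"
    using M.zero_closed by blast
  ultimately obtain \<rho> where \<rho>: "continuous_map TN (subtopology TN (f ` carrier M)) \<rho>"
    and \<rho>_id: "\<forall>y\<in>f ` carrier M. \<rho> y = y"
    using N.closedin_retract_of_space unfolding retract_of_space_def by blast
  have "continuous_map TN TM (g \<circ> \<rho>)"
    using continuous_map_compose[OF \<rho>] g unfolding homeomorphic_maps_def by blast
  moreover have "(g \<circ> \<rho>) (f x) = x" if "x \<in> carrier M" for x
    using g \<rho>_id that unfolding homeomorphic_maps_def by (simp add: M.topspace_eq)
  ultimately show "\<exists>r. continuous_map TN TM r \<and> (\<forall>x\<in>carrier M. r (f x) = x)"
    by blast
next
  assume "\<exists>r. continuous_map TN TM r \<and> (\<forall>x\<in>carrier M. r (f x) = x)"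
  then obtain r where r: "continuous_map TN TM r" "\<forall>x\<in>carrier M. r (f x) = x"
    by blast
  have "homeomorphic_maps TM (subtopology TN (f ` carrier M)) f r"
    unfolding homeomorphic_maps_def
    using continuous_map_into_subtopology[OF continuous] continuous_map_from_subtopology[OF r(1)] r(2)
    by (auto simp: M.topspace_eq N.topspace_eq)
  then show "homeomorphic_map TM (subtopology TN (f ` carrier M)) f"
    by (auto simp: homeomorphic_map_maps)
qed

end

section \<open>Strict maps\<close>

lemma openin_quotient_mod_topology:
  "openin (quotient_mod_topology M TM K) P \<longleftrightarrow>
    P \<subseteq> mod_coset M K ` carrier M \<and> openin TM {x \<in> carrier M. mod_coset M K x \<in> P}"
proof -
  have "istopology (\<lambda>P. P \<subseteq> mod_coset M K ` carrier M \<and> openin TM {x \<in> carrier M. mod_coset M K x \<in> P})"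
    unfolding istopology_def
  proof (rule conjI; intro allI impI)
    fix P Q
    assume "P \<subseteq> mod_coset M K ` carrier M \<and> openin TM {x \<in> carrier M. mod_coset M K x \<in> P}"
      and "Q \<subseteq> mod_coset M K ` carrier M \<and> openin TM {x \<in> carrier M. mod_coset M K x \<in> Q}"
    moreover have "{x \<in> carrier M. mod_coset M K x \<in> P \<inter> Q} =
        {x \<in> carrier M. mod_coset M K x \<in> P} \<inter> {x \<in> carrier M. mod_coset M K x \<in> Q}"
      by blast
    ultimately show "P \<inter> Q \<subseteq> mod_coset M K ` carrier M \<and> openin TM {x \<in> carrier M. mod_coset M K x \<in> P \<inter> Q}"
      by auto
  next
    fix \<P>
    assume "\<forall>P\<in>\<P>. P \<subseteq> mod_coset M K ` carrier M \<and> openin TM {x \<in> carrier M. mod_coset M K x \<in> P}"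
    moreover have "{x \<in> carrier M. mod_coset M K x \<in> \<Union>\<P>} = (\<Union>P\<in>\<P>. {x \<in> carrier M. mod_coset M K x \<in> P})"
      by blast
    ultimately show "\<Union>\<P> \<subseteq> mod_coset M K ` carrier M \<and> openin TM {x \<in> carrier M. mod_coset M K x \<in> \<Union>\<P>}"
      by auto
  qed
  then show ?thesis
    unfolding quotient_mod_topology_def by simp
qed

lemma quotient_map_mod_coset:
  assumes top: "topspace TM = carrier M"
  shows "quotient_map TM (quotient_mod_topology M TM K) (mod_coset M K)"
proof -
  have "{x \<in> carrier M. mod_coset M K x \<in> mod_coset M K ` carrier M} = topspace TM"
    using top by blast
  then have "openin (quotient_mod_topology M TM K) (mod_coset M K ` carrier M)"
    unfolding openin_quotient_mod_topology by simp
  then have "topspace (quotient_mod_topology M TM K) = mod_coset M K ` carrier M"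
    using openin_subset unfolding topspace_def openin_quotient_mod_topology by blast
  then show ?thesis
    unfolding quotient_map_def top openin_quotient_mod_topology by auto
qed

lemma mod_coset_mod_kernel:
  assumes "abelian_group_hom M N f" "x \<in> carrier M"
  shows "mod_coset M (mod_kernel M N f) x = {z \<in> carrier M. f z = f x}"
proof -
  interpret abelian_group_hom M N f
    by fact
  have "z \<in> mod_coset M (mod_kernel M N f) x \<longleftrightarrow> z \<in> carrier M \<and> f z = f x" for z
  proof
    assume "z \<in> mod_coset M (mod_kernel M N f) x"
    then obtain k where "k \<in> carrier M" "f k = \<zero>\<^bsub>N\<^esub>" "z = x \<oplus>\<^bsub>M\<^esub> k"
      unfolding mod_coset_def mod_kernel_def by blast
    then show "z \<in> carrier M \<and> f z = f x"
      using assms(2) by simp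
  next
    assume z: "z \<in> carrier M \<and> f z = f x"
    then have "z \<ominus>\<^bsub>M\<^esub> x \<in> mod_kernel M N f"
      using assms(2) unfolding mod_kernel_def by (simp add: a_minus_def H.r_neg)
    moreover have "z = x \<oplus>\<^bsub>M\<^esub> (z \<ominus>\<^bsub>M\<^esub> x)"
      using z assms(2) by (simp add: G.add_minus_cancel)
    ultimately show "z \<in> mod_coset M (mod_kernel M N f) x"
      unfolding mod_coset_def by blast
  qed
  then show ?thesis
    by blast
qed

lemma strict_map_iff_quotient_map:
  assumes hom: "abelian_group_hom M N f" and top: "topspace TM = carrier M"
  shows "strict_map M TM N TN f \<longleftrightarrow> quotient_map TM (subtopology TN (f ` carrier M)) f"
proof -
  define cos where "cos = mod_coset M (mod_kernel M N f)"
  define Q where "Q = quotient_mod_topology M TM (mod_kernel M N f)"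
  define Y where "Y = subtopology TN (f ` carrier M)"
  have cos: "quotient_map TM Q cos"
    unfolding cos_def Q_def by (rule quotient_map_mod_coset[OF top])
  have cos_eq: "cos x = {z \<in> carrier M. f z = f x}" if "x \<in> carrier M" for x
    unfolding cos_def using mod_coset_mod_kernel[OF hom that] .
  have induced: "induced_map f (cos x) = f x" if "x \<in> carrier M" for x
    unfolding induced_map_def cos_eq[OF that] using that
    by (metis (mono_tags, lifting) mem_Collect_eq someI_ex)
  have topspace_Q: "topspace Q = cos ` carrier M"
    using quotient_imp_surjective_map[OF cos] top by simp
  have "inj_on (induced_map f) (topspace Q)"
    unfolding topspace_Q inj_on_def using induced cos_eq by auto
  then have "strict_map M TM N TN f \<longleftrightarrow> quotient_map Q Y (induced_map f)"
    unfolding strict_map_def Q_def Y_def homeomorphic_map_def by simp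
  also have "\<dots> \<longleftrightarrow> quotient_map TM Y (induced_map f \<circ> cos)"
    by (rule quotient_map_compose_eq[OF cos, symmetric])
  also have "\<dots> \<longleftrightarrow> quotient_map TM Y f"
    using quotient_map_eq[of TM Y] induced top by (metis comp_apply)
  finally show ?thesis
    unfolding Y_def .
qed

section \<open>Complete t.d. modules\<close>

locale open_subgroup_basis = subgroup_chain G U for G (structure) and U +
  fixes T :: "'a topology"
  assumes topspace_eq: "topspace T = carrier G"
    and add_continuous: "continuous_map (prod_topology T T) T (\<lambda>(x, y). x \<oplus> y)"
    and openin_U: "openin T (U n)"
    and U_basis: "\<lbrakk>openin T W; \<zero> \<in> W\<rbrakk> \<Longrightarrow> \<exists>n. U n \<subseteq> W"
begin

lemma openin_translate:
  assumes a: "a \<in> carrier G" and W: "openin T W"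
  shows "openin T {z \<in> carrier G. a \<oplus> z \<in> W}"
proof -
  have "continuous_map T (prod_topology T T) (\<lambda>z. (a, z))"
    unfolding continuous_map_pairwise o_def using a topspace_eq by simp
  from continuous_map_compose[OF this add_continuous]
  have "continuous_map T T (\<lambda>z. a \<oplus> z)"
    by (simp add: o_def)
  from openin_continuous_map_preimage[OF this W] show ?thesis
    by (simp add: topspace_eq)
qed

lemma openin_U_ball:
  assumes x: "x \<in> carrier G"
  shows "openin T {y \<in> carrier G. y \<ominus> x \<in> U n}"
proof -
  have "{y \<in> carrier G. y \<ominus> x \<in> U n} = {y \<in> carrier G. \<ominus> x \<oplus> y \<in> U n}"
    using x by (auto simp: minus_eq a_comm)
  then show ?thesis
    using openin_translate[OF a_inv_closed[OF x] openin_U] by simp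
qed

lemma openin_iff:
  "openin T W \<longleftrightarrow> W \<subseteq> carrier G \<and> (\<forall>x\<in>W. \<exists>n. \<forall>y\<in>carrier G. y \<ominus> x \<in> U n \<longrightarrow> y \<in> W)"
proof
  assume W: "openin T W"
  then have W_carrier: "W \<subseteq> carrier G"
    using openin_subset topspace_eq by blast
  have "\<exists>n. \<forall>y\<in>carrier G. y \<ominus> x \<in> U n \<longrightarrow> y \<in> W" if x: "x \<in> W" for x
  proof -
    have xc: "x \<in> carrier G"
      using x W_carrier by blast
    then obtain n where n: "U n \<subseteq> {z \<in> carrier G. x \<oplus> z \<in> W}"
      using U_basis[OF openin_translate[OF xc W]] x by auto
    have "y \<in> W" if "y \<in> carrier G" "y \<ominus> x \<in> U n" for y
      using n that add_minus_cancel[OF xc that(1)] by auto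
    then show ?thesis
      by blast
  qed
  with W_carrier show "W \<subseteq> carrier G \<and> (\<forall>x\<in>W. \<exists>n. \<forall>y\<in>carrier G. y \<ominus> x \<in> U n \<longrightarrow> y \<in> W)"
    by blast
next
  assume W: "W \<subseteq> carrier G \<and> (\<forall>x\<in>W. \<exists>n. \<forall>y\<in>carrier G. y \<ominus> x \<in> U n \<longrightarrow> y \<in> W)"
  show "openin T W"
    unfolding openin_subopen[of T W]
  proof
    fix x assume x: "x \<in> W"
    then obtain n where "\<forall>y\<in>carrier G. y \<ominus> x \<in> U n \<longrightarrow> y \<in> W"
      using W by blast
    moreover have "x \<in> carrier G"
      using x W by blast
    ultimately show "\<exists>B. openin T B \<and> x \<in> B \<and> B \<subseteq> W"
      using openin_U_ball by (intro exI[of _ "{y \<in> carrier G. y \<ominus> x \<in> U n}"]) auto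
  qed
qed

lemma Inter_U_if_Hausdorff:
  assumes "Hausdorff_space T" "x \<in> carrier G" "\<And>n. x \<in> U n"
  shows "x = \<zero>"
proof (rule ccontr)
  assume "x \<noteq> \<zero>"
  moreover have "\<zero> \<in> topspace T" "x \<in> topspace T"
    using assms(2) by (simp_all add: topspace_eq)
  ultimately obtain W W' where "openin T W" "openin T W'" "\<zero> \<in> W" "x \<in> W'" "disjnt W W'"
    using assms(1) unfolding Hausdorff_space_def by metis
  moreover obtain n where "U n \<subseteq> W"
    using U_basis calculation by blast
  ultimately show False
    using assms(3)[of n] unfolding disjnt_def by blast
qed

lemma separable_if_second_countable:
  assumes "second_countable T"
  shows "\<exists>D. countable D \<and> D \<subseteq> carrier G \<and> (\<forall>x\<in>carrier G. \<forall>n. \<exists>d\<in>D. d \<ominus> x \<in> U n)"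
proof -
  obtain \<B> where "countable \<B> \<and> (\<forall>B\<in>\<B>. openin T B) \<and>
      (\<forall>W x. openin T W \<and> x \<in> W \<longrightarrow> (\<exists>B\<in>\<B>. x \<in> B \<and> B \<subseteq> W))"
    using assms unfolding second_countable_def by blast
  then have \<B>: "countable \<B>" "\<And>B. B \<in> \<B> \<Longrightarrow> openin T B"
    and base: "\<And>W x. openin T W \<Longrightarrow> x \<in> W \<Longrightarrow> \<exists>B\<in>\<B>. x \<in> B \<and> B \<subseteq> W"
    by blast+
  define D where "D = (\<lambda>B. SOME p. p \<in> B) ` (\<B> - {{}})"
  have "(SOME p. p \<in> B) \<in> carrier G" if "B \<in> \<B> - {{}}" for B
    using that \<B>(2) openin_subset[of T B] topspace_eq some_in_eq by blast
  then have "D \<subseteq> carrier G"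
    unfolding D_def by blast
  moreover have "countable D"
    unfolding D_def using \<B>(1) by simp
  moreover have "\<exists>d\<in>D. d \<ominus> x \<in> U n" if x: "x \<in> carrier G" for x n
  proof -
    have "x \<in> {y \<in> carrier G. y \<ominus> x \<in> U n}"
      using x by simp
    then obtain B where B: "B \<in> \<B>" "x \<in> B" "B \<subseteq> {y \<in> carrier G. y \<ominus> x \<in> U n}"
      using base[OF openin_U_ball[OF x]] by blast
    then have "(SOME p. p \<in> B) \<in> B" "(SOME p. p \<in> B) \<in> D"
      unfolding D_def using some_in_eq by blast+
    with B(3) show ?thesis
      by blast
  qed
  ultimately show ?thesis
    by blast
qed

end

lemma complete_if_complete_module_top:
  fixes M :: "('r, 'm) module"
  assumes basis: "open_subgroup_basis M V TM" and complete: "complete_module_top M TM"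
    and S: "\<And>k. S k \<in> carrier M" and cauchy: "\<And>k l. k \<le> l \<Longrightarrow> S l \<ominus>\<^bsub>M\<^esub> S k \<in> V k"
  shows "\<exists>x\<in>carrier M. \<forall>k. x \<ominus>\<^bsub>M\<^esub> S k \<in> V k"
proof -
  interpret open_subgroup_basis M V TM
    by (rule basis)
  define F where "F = filtermap S sequentially"
  have "cauchy_filter_in M TM F"
    unfolding cauchy_filter_in_def
  proof (intro allI impI)
    fix W assume "openin TM W \<and> \<zero>\<^bsub>M\<^esub> \<in> W"
    then obtain n where n: "V n \<subseteq> W"
      using U_basis by blast
    have "S k \<ominus>\<^bsub>M\<^esub> S l \<in> V n" if "n \<le> k" "n \<le> l" for k l
      using U_minus[OF cauchy[OF that(1)] cauchy[OF that(2)]] minus_minus_cancel S by simp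
    then have "\<forall>x\<in>S ` {n..}. \<forall>y\<in>S ` {n..}. x \<ominus>\<^bsub>M\<^esub> y \<in> W"
      using n by blast
    moreover have "eventually (\<lambda>x. x \<in> S ` {n..}) F"
      unfolding F_def eventually_filtermap eventually_sequentially by auto
    ultimately show "\<exists>A. eventually (\<lambda>x. x \<in> A) F \<and> (\<forall>x\<in>A. \<forall>y\<in>A. x \<ominus>\<^bsub>M\<^esub> y \<in> W)"
      by blast
  qed
  moreover have "F \<noteq> bot" "eventually (\<lambda>x. x \<in> carrier M) F"
    unfolding F_def by (simp_all add: filtermap_bot_iff eventually_filtermap S)
  ultimately obtain x where x: "x \<in> carrier M" "limitin TM id x F"
    using complete unfolding complete_module_top_def by blast
  have "x \<ominus>\<^bsub>M\<^esub> S k \<in> V k" for k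
  proof -
    have "x \<in> {y \<in> carrier M. y \<ominus>\<^bsub>M\<^esub> x \<in> V k}"
      using x(1) by simp
    moreover have "\<forall>W. openin TM W \<and> x \<in> W \<longrightarrow> eventually (\<lambda>l. S l \<in> W) sequentially"
      using x(2) unfolding limitin_def F_def eventually_filtermap by simp
    ultimately have "eventually (\<lambda>l. S l \<in> {y \<in> carrier M. y \<ominus>\<^bsub>M\<^esub> x \<in> V k}) sequentially"
      using openin_U_ball[OF x(1)] by blast
    then obtain l0 where "\<forall>l\<ge>l0. S l \<ominus>\<^bsub>M\<^esub> x \<in> V k"
      unfolding eventually_sequentially by blast
    then obtain l where l: "k \<le> l" "S l \<ominus>\<^bsub>M\<^esub> x \<in> V k"
      using max.cobounded1 max.cobounded2 by blast
    show ?thesis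
      using U_diff_trans[OF S S x(1) U_diff_sym[OF x(1) S l(2)] cauchy[OF l(1)]] .
  qed
  with x(1) show ?thesis
    by blast
qed

lemma additive_subgroup_if_left_submodule:
  assumes "abelian_group M" "left_submodule R M V"
  shows "additive_subgroup V M"
proof -
  interpret abelian_group M
    by fact
  show ?thesis
    using assms(2) unfolding left_submodule_def additive_subgroup_def
    by (intro add.subgroupI) auto
qed

lemma ex_countable_nhds_basis:
  assumes "second_countable X" "x \<in> topspace X"
  shows "\<exists>b :: nat \<Rightarrow> 'a set. (\<forall>k. openin X (b k) \<and> x \<in> b k) \<and>
    (\<forall>W. openin X W \<and> x \<in> W \<longrightarrow> (\<exists>k. b k \<subseteq> W))"
proof -
  obtain \<B> where "countable \<B> \<and> (\<forall>B\<in>\<B>. openin X B) \<and>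
      (\<forall>W x. openin X W \<and> x \<in> W \<longrightarrow> (\<exists>B\<in>\<B>. x \<in> B \<and> B \<subseteq> W))"
    using assms(1) unfolding second_countable_def by blast
  then have \<B>: "countable \<B>" "\<And>B. B \<in> \<B> \<Longrightarrow> openin X B"
    and base: "\<And>W. openin X W \<Longrightarrow> x \<in> W \<Longrightarrow> \<exists>B\<in>\<B>. x \<in> B \<and> B \<subseteq> W"
    by blast+
  define \<B>x where "\<B>x = {B \<in> \<B>. x \<in> B}"
  have "countable \<B>x"
    unfolding \<B>x_def using \<B>(1) by simp
  have "\<B>x \<noteq> {}"
    using base[OF openin_topspace assms(2)] unfolding \<B>x_def by blast
  have enum: "from_nat_into \<B>x k \<in> \<B>x" for k
    using from_nat_into[OF \<open>\<B>x \<noteq> {}\<close>] .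
  have surj: "\<exists>k. from_nat_into \<B>x k = B" if "B \<in> \<B>x" for B
    using from_nat_into_surj[OF \<open>countable \<B>x\<close> that] .
  show ?thesis
  proof (intro exI[of _ "from_nat_into \<B>x"] conjI allI impI)
    show "openin X (from_nat_into \<B>x k)" "x \<in> from_nat_into \<B>x k" for k
      using enum \<B>(2) unfolding \<B>x_def by auto
  next
    fix W assume "openin X W \<and> x \<in> W"
    then obtain B where "B \<in> \<B>x" "B \<subseteq> W"
      using base unfolding \<B>x_def by blast
    then show "\<exists>k. from_nat_into \<B>x k \<subseteq> W"
      using surj by fastforce
  qed
qed

lemma ex_open_subgroup_basis:
  assumes "td_module R TR M TM"
  shows "\<exists>V. open_subgroup_basis M V TM"
proof -
  have module: "topological_module R TR M TM"
    and submodules: "\<And>W. openin TM W \<Longrightarrow> \<zero>\<^bsub>M\<^esub> \<in> W \<Longrightarrow> \<exists>V. left_submodule R M V \<and> openin TM V \<and> V \<subseteq> W"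
    and "second_countable TM"
    using assms unfolding td_module_def by blast+
  then have M: "abelian_group M" and top: "topspace TM = carrier M"
    and add: "continuous_map (prod_topology TM TM) TM (\<lambda>(x, y). x \<oplus>\<^bsub>M\<^esub> y)"
    unfolding topological_module_def left_module_def by blast+
  interpret abelian_group M
    by (rule M)
  have "\<zero>\<^bsub>M\<^esub> \<in> topspace TM"
    using top by simp
  from ex_countable_nhds_basis[OF \<open>second_countable TM\<close> this]
  obtain b :: "nat \<Rightarrow> _" where b: "\<forall>k. openin TM (b k) \<and> \<zero>\<^bsub>M\<^esub> \<in> b k"
    and b_basis: "\<forall>W. openin TM W \<and> \<zero>\<^bsub>M\<^esub> \<in> W \<longrightarrow> (\<exists>k. b k \<subseteq> W)"
    by blast
  have "\<exists>W. additive_subgroup W M \<and> openin TM W \<and> W \<subseteq> b k" for k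
    using b submodules[of "b k"] additive_subgroup_if_left_submodule[OF M] by blast
  then obtain W where W: "\<And>k. additive_subgroup (W k) M" "\<And>k. openin TM (W k)" "\<And>k. W k \<subseteq> b k"
    by metis
  define V where "V n = (\<Inter>k\<in>{..n}. W k)" for n
  have "additive_subgroup (V n) M" for n
    unfolding V_def additive_subgroup_def
    using W(1) by (intro add.subgroups_Inter) (auto simp: additive_subgroup_def)
  moreover have "V n \<subseteq> V m" if "m \<le> n" for m n
    unfolding V_def using that by auto
  moreover have "openin TM (V n)" for n
    unfolding V_def using W(2) by (intro openin_INT2) auto
  moreover have "\<exists>n. V n \<subseteq> U" if U: "openin TM U" "\<zero>\<^bsub>M\<^esub> \<in> U" for U
  proof -
    obtain k where "b k \<subseteq> U"
      using b_basis U by blast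
    then have "V k \<subseteq> U"
      using W(3)[of k] unfolding V_def by blast
    then show ?thesis ..
  qed
  ultimately have "open_subgroup_basis M V TM"
    using top add
    by (intro open_subgroup_basis.intro subgroup_chain.intro subgroup_chain_axioms.intro
        open_subgroup_basis_axioms.intro M) auto
  then show ?thesis
    by blast
qed

lemma td_group_if_td_module:
  assumes td: "td_module R TR M TM"
  shows "\<exists>V. td_group M V TM"
proof -
  obtain V where basis: "open_subgroup_basis M V TM"
    using ex_open_subgroup_basis[OF td] by blast
  interpret open_subgroup_basis M V TM
    by (rule basis)
  have "Hausdorff_space TM" "complete_module_top M TM" "second_countable TM"
    using td unfolding td_module_def by blast+
  then have "td_group M V TM"
    by unfold_locales
      (use topspace_eq openin_iff Inter_U_if_Hausdorff complete_if_complete_module_top[OF basis]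
        separable_if_second_countable in auto)
  then show ?thesis
    by blast
qed

lemma td_hom_if_linear_map_mod:
  assumes "td_module R TR M TM" "td_module R TR N TN"
    and f: "linear_map_mod R M N f" "continuous_map TM TN f"
  shows "\<exists>V U. td_hom M V TM N U TN f"
proof -
  obtain V U where M: "td_group M V TM" and N: "td_group N U TN"
    using td_group_if_td_module assms(1,2) by metis
  interpret M: td_group M V TM
    by (rule M)
  interpret N: td_group N U TN
    by (rule N)
  have "group_hom (add_monoid M) (add_monoid N) f"
    using f(1) unfolding linear_map_mod_def
    by (intro group_hom.intro group_hom_axioms.intro M.a_group N.a_group) (auto simp: hom_def)
  then have "abelian_group_hom M N f"
    by (intro abelian_group_homI M.abelian_group_axioms N.abelian_group_axioms)
  then have "td_hom M V TM N U TN f"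
    by (intro td_hom.intro M N td_hom_axioms.intro f(2))
  then show ?thesis
    by blast
qed

theorem proposition2p7:
  fixes R :: "('r, 'x) ring_scheme" and TR :: "'r topology"
    and M :: "('r, 'm) module" and TM :: "'m topology"
    and N :: "('r, 'n) module" and TN :: "'n topology"
    and f :: "'m \<Rightarrow> 'n"
  assumes "topological_ring R TR"
    and "compact_space TR" and "Hausdorff_space TR" and "first_countable TR"
  shows "(td_module R TR M TM \<and> td_module R TR N TN \<and> linear_map_mod R M N f \<and>
           continuous_map TM TN f \<and> f ` carrier M = carrier N \<longrightarrow>
           strict_map M TM N TN f \<and>
           (\<exists>s. continuous_map TN TM s \<and> (\<forall>y\<in>carrier N. f (s y) = y)))
       \<and> (td_module R TR M TM \<and> td_module R TR N TN \<and> linear_map_mod R M N f \<and>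
           continuous_map TM TN f \<and> inj_on f (carrier M) \<longrightarrow>
           (strict_map M TM N TN f \<longleftrightarrow>
            (\<exists>r. continuous_map TN TM r \<and> (\<forall>x\<in>carrier M. r (f x) = x))))"
proof (rule conjI; intro impI)
  assume A: "td_module R TR M TM \<and> td_module R TR N TN \<and> linear_map_mod R M N f \<and>
    continuous_map TM TN f \<and> f ` carrier M = carrier N"
  then obtain V U where "td_hom M V TM N U TN f"
    using td_hom_if_linear_map_mod by metis
  then interpret td_surj_hom M V TM N U TN f
    using A by (intro td_surj_hom.intro td_surj_hom_axioms.intro) blast+
  have "subtopology TN (f ` carrier M) = TN"
    by (metis N.topspace_eq subtopology_topspace surjective)
  then show "strict_map M TM N TN f \<and> (\<exists>s. continuous_map TN TM s \<and> (\<forall>y\<in>carrier N. f (s y) = y))"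
    using strict_map_iff_quotient_map[OF is_abelian_group_hom M.topspace_eq] quotient_map_hom
      continuous_section by simp
next
  assume A: "td_module R TR M TM \<and> td_module R TR N TN \<and> linear_map_mod R M N f \<and>
    continuous_map TM TN f \<and> inj_on f (carrier M)"
  then obtain V U where "td_hom M V TM N U TN f"
    using td_hom_if_linear_map_mod by metis
  then interpret td_hom M V TM N U TN f .
  show "strict_map M TM N TN f \<longleftrightarrow> (\<exists>r. continuous_map TN TM r \<and> (\<forall>x\<in>carrier M. r (f x) = x))"
    using strict_map_iff_quotient_map[OF is_abelian_group_hom M.topspace_eq] A
      homeomorphic_map_iff_retraction by (simp add: homeomorphic_map_def M.topspace_eq)
qed

end
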